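(* For all real numbers $a,b,c>0$, \[ \frac{(a+b+c)^3}{(ab+bc+ca)^2}\leq \frac{4a}{(b+c)^2}+\frac{4b}{(c+a)^2}+\frac{4c}{(a+b)^2}. \] *)

theory Defs
  imports Complex_Main
begin

end

theory Submission
  imports Defs
begin

text \<open>Each term \<open>a / (b + c)\<^sup>2\<close> equals \<open>a\<^sup>3 / (a (b + c))\<^sup>2\<close>, and the denominators \<open>a (b + c)\<close>
  add up to \<open>2 (a b + b c + c a)\<close>. Radon's inequality
  \<open>(\<Sum>x\<^sub>i)\<^sup>3 / (\<Sum>y\<^sub>i)\<^sup>2 \<le> \<Sum>x\<^sub>i\<^sup>3 / y\<^sub>i\<^sup>2\<close> therefore gives the claim, with the factor 4 coming from
  the square of that 2. Radon's inequality itself follows by summing the tangent-line bounds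
  of the convex function \<open>x\<^sup>3 / y\<^sup>2\<close> at the common ratio \<open>x / y = \<Sum>x\<^sub>i / \<Sum>y\<^sub>i\<close>.\<close>

lemma cube_div_square_ge_tangent:
  fixes x y k :: real
  assumes "x \<ge> 0" "y > 0" "k \<ge> 0"
  shows "3 * x * k ^ 2 - 2 * y * k ^ 3 \<le> x ^ 3 / y ^ 2"
proof -
  have "x ^ 3 - (3 * x * k ^ 2 - 2 * y * k ^ 3) * y ^ 2 = (x - k * y) ^ 2 * (x + 2 * k * y)"
    by (simp add: algebra_simps power2_eq_square power3_eq_cube)
  also have "\<dots> \<ge> 0"
    using assms by simp
  finally show ?thesis
    using assms by (simp add: pos_le_divide_eq)
qed

lemma radon_inequality_cube:
  fixes x y :: "'i \<Rightarrow> real"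
  assumes "finite I" and "\<And>i. i \<in> I \<Longrightarrow> x i \<ge> 0" and "\<And>i. i \<in> I \<Longrightarrow> y i > 0"
  shows "(\<Sum>i\<in>I. x i) ^ 3 / (\<Sum>i\<in>I. y i) ^ 2 \<le> (\<Sum>i\<in>I. x i ^ 3 / y i ^ 2)"
proof (cases "I = {}")
  case False
  define S where "S = (\<Sum>i\<in>I. x i)"
  define T where "T = (\<Sum>i\<in>I. y i)"
  define k where "k = S / T"
  have "T > 0"
    unfolding T_def using assms False by (intro sum_pos) auto
  moreover have "S \<ge> 0"
    unfolding S_def using assms by (intro sum_nonneg) auto
  ultimately have "k \<ge> 0"
    unfolding k_def by simp
  have "S ^ 3 / T ^ 2 = 3 * S * k ^ 2 - 2 * T * k ^ 3"
    using \<open>T > 0\<close> unfolding k_def by (simp add: power2_eq_square power3_eq_cube field_simps)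
  also have "\<dots> = (\<Sum>i\<in>I. 3 * x i * k ^ 2 - 2 * y i * k ^ 3)"
    unfolding S_def T_def by (simp add: sum_subtractf sum_distrib_left sum_distrib_right)
  also have "\<dots> \<le> (\<Sum>i\<in>I. x i ^ 3 / y i ^ 2)"
    using assms \<open>k \<ge> 0\<close> by (intro sum_mono cube_div_square_ge_tangent) auto
  finally show ?thesis
    unfolding S_def T_def .
qed simp

lemma cube_div_square_mult:
  fixes x y :: real
  shows "x ^ 3 / (x * y) ^ 2 = x / y ^ 2"
  by (cases "x = 0") (simp_all add: power2_eq_square power3_eq_cube)

theorem mainTheorem1:
  fixes a b c :: real
  assumes "a > 0" and "b > 0" and "c > 0"
  shows "(a + b + c) ^ 3 / (a * b + b * c + c * a) ^ 2
           \<le> 4 * a / (b + c) ^ 2 + 4 * b / (c + a) ^ 2 + 4 * c / (a + b) ^ 2"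
proof -
  define x where "x = (!) [a, b, c]"
  define y where "y = (!) [a * (b + c), b * (c + a), c * (a + b)]"
  have sum_3: "(\<Sum>i<3. f i) = f 0 + f 1 + f 2" for f :: "nat \<Rightarrow> real"
    by (simp add: eval_nat_numeral)
  have "(\<Sum>i<3. x i) ^ 3 / (\<Sum>i<3. y i) ^ 2 \<le> (\<Sum>i<3. x i ^ 3 / y i ^ 2)"
    using assms by (intro radon_inequality_cube)
      (auto simp: x_def y_def less_Suc_eq numeral_3_eq_3 nth_Cons')
  moreover have "(\<Sum>i<3. y i) = 2 * (a * b + b * c + c * a)"
    by (simp add: sum_3 y_def algebra_simps)
  ultimately have radon: "(a + b + c) ^ 3 / (2 * (a * b + b * c + c * a)) ^ 2
                           \<le> a / (b + c) ^ 2 + b / (c + a) ^ 2 + c / (a + b) ^ 2"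
    by (simp add: sum_3 x_def y_def cube_div_square_mult)
  have "(a + b + c) ^ 3 / (a * b + b * c + c * a) ^ 2
          = 4 * ((a + b + c) ^ 3 / (2 * (a * b + b * c + c * a)) ^ 2)"
    by (simp only: power_mult_distrib) simp
  also have "\<dots> \<le> 4 * (a / (b + c) ^ 2 + b / (c + a) ^ 2 + c / (a + b) ^ 2)"
    using radon by simp
  finally show ?thesis
    by (simp add: distrib_left)
qed

end
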